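(* Let $\Gamma$ be a congruence subgroup of $\mathrm{SL}_2(\mathbb{Z})$ containing $-I$, of level $N_0$, and let $N=N_0$, $4N_0$ or $2N_0$ according as $v_2(N_0)$ is $0$, $1$ or $\ge2$; assume $N>1$. Let $H$ be the image of $\Gamma$ in $\mathrm{SL}_2(\mathbb{Z}/N\mathbb{Z})$, let $\widetilde H=(\mathbb{Z}/N\mathbb{Z})^\times\cdot H\subseteq\mathrm{GL}_2(\mathbb{Z}/N\mathbb{Z})$, and assume $H=\widetilde H\cap\mathrm{SL}_2(\mathbb{Z}/N\mathbb{Z})$. Let $\mathcal{N}$ be the normalizer of $\widetilde H$ in $\mathrm{GL}_2(\mathbb{Z}/N\mathbb{Z})$, $\mathcal{C}=\mathcal{N}/\widetilde H$, and $Q_N=(\mathbb{Z}/N\mathbb{Z})^\times/((\mathbb{Z}/N\mathbb{Z})^\times)^2$, with $\det\colon\mathcal{C}\to Q_N$ the homomorphism induced by the determinant. Then the subgroups $G(N)\subseteq\mathrm{GL}_2(\mathbb{Z}/N\mathbb{Z})$ satisfying (a) $G(N)\cap\mathrm{SL}_2(\mathbb{Z}/N\mathbb{Z})=H$, (b) $G(N)\supseteq(\mathbb{Z}/N\mathbb{Z})^\times\cdot I$, and (c) $\det(G(N))=(\mathbb{Z}/N\mathbb{Z})^\times$ are precisely the inverse images under $\mathcal{N}\to\mathcal{C}$ of the subgroups $W\subseteq\mathcal{C}$ for which the determinant induces an isomorphism $W\xrightarrow{\sim}Q_N$.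
   Context: $v_2$ is the $2$-adic valuation. The determinant induces a map on $\mathcal{C}$ to $Q_N$ because $\det(\widetilde H)=((\mathbb{Z}/N\mathbb{Z})^\times)^2$. *)

theory Defs
  imports "HOL-Algebra.Algebra" "HOL-Computational_Algebra.Primes"
begin

text \<open>2x2 matrices (a,b,c,d) = [[a,b],[c,d]] with integer entries.\<close>
type_synonym mat2 = "int \<times> int \<times> int \<times> int"

fun mmul :: "mat2 \<Rightarrow> mat2 \<Rightarrow> mat2" where
  "mmul (a,b,c,d) (p,q,r,s) = (a*p + b*r, a*q + b*s, c*p + d*r, c*q + d*s)"

fun mdet :: "mat2 \<Rightarrow> int" where
  "mdet (x1,x2,x3,x4) = x1*x4 - x2*x3"

fun mred :: "nat \<Rightarrow> mat2 \<Rightarrow> mat2" where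
  "mred N (a,b,c,d) = (a mod int N, b mod int N, c mod int N, d mod int N)"

definition scal :: "int \<Rightarrow> mat2" where
  "scal u = (u, 0, 0, u)"

definition SL2Z :: "mat2 monoid" where
  "SL2Z = \<lparr>carrier = {A. mdet A = 1}, monoid.mult = mmul, monoid.one = (1,0,0,1)\<rparr>"

definition principal_cong :: "nat \<Rightarrow> mat2 set" where
  "principal_cong M = {A \<in> carrier SL2Z. mred M A = mred M (1,0,0,1)}"

definition congruence_subgroup :: "mat2 set \<Rightarrow> bool" where
  "congruence_subgroup \<Gamma> \<longleftrightarrow> subgroup \<Gamma> SL2Z \<and> (\<exists>M>0. principal_cong M \<subseteq> \<Gamma>)"

definition level :: "mat2 set \<Rightarrow> nat" where
  "level \<Gamma> = (LEAST M. M > 0 \<and> principal_cong M \<subseteq> \<Gamma>)"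

definition units_mod :: "nat \<Rightarrow> int set" where
  "units_mod N = {u. 0 \<le> u \<and> u < int N \<and> coprime u (int N)}"

definition GL2 :: "nat \<Rightarrow> mat2 monoid" where
  "GL2 N = \<lparr>carrier = {A. mred N A = A \<and> coprime (mdet A) (int N)},
            monoid.mult = (\<lambda>A B. mred N (mmul A B)), monoid.one = mred N (1,0,0,1)\<rparr>"

definition SL2 :: "nat \<Rightarrow> mat2 set" where
  "SL2 N = {A \<in> carrier (GL2 N). mdet A mod int N = 1 mod int N}"

definition UnitsN :: "nat \<Rightarrow> int monoid" where
  "UnitsN N = \<lparr>carrier = units_mod N, monoid.mult = (\<lambda>x y. (x*y) mod int N), monoid.one = 1 mod int N\<rparr>"

definition squares_mod :: "nat \<Rightarrow> int set" where
  "squares_mod N = {(u*u) mod int N | u. u \<in> units_mod N}"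

definition QN :: "nat \<Rightarrow> int set monoid" where
  "QN N = UnitsN N Mod squares_mod N"

definition Htilde :: "nat \<Rightarrow> mat2 set \<Rightarrow> mat2 set" where
  "Htilde N H = {mred N (mmul (scal u) h) | u h. u \<in> units_mod N \<and> h \<in> H}"

definition NormHt :: "nat \<Rightarrow> mat2 set \<Rightarrow> mat2 set" where
  "NormHt N H = normalizer (GL2 N) (Htilde N H)"

definition Cgrp :: "nat \<Rightarrow> mat2 set \<Rightarrow> mat2 set monoid" where
  "Cgrp N H = ((GL2 N)\<lparr>carrier := NormHt N H\<rparr>) Mod (Htilde N H)"

text \<open>Map \<C> \<rightarrow> Q_N induced by the determinant: a coset K goes to the
  square class of det g for (any, equivalently some) g in K.\<close>
definition detC :: "nat \<Rightarrow> mat2 set \<Rightarrow> int set" where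
  "detC N K = r_coset (UnitsN N) (squares_mod N) (mdet (SOME g. g \<in> K) mod int N)"

definition preimC :: "nat \<Rightarrow> mat2 set \<Rightarrow> mat2 set set \<Rightarrow> mat2 set" where
  "preimC N H W = {g \<in> NormHt N H. r_coset (GL2 N) (Htilde N H) g \<in> W}"

end

theory Submission
  imports Defs "HOL-Number_Theory.Residues"
begin

text \<open>
  Write \<open>K = (\<int>/N\<int>)\<^sup>\<times> \<cdot> H\<close>. Since \<open>det (u h) = u\<^sup>2\<close>, the determinant maps \<open>K\<close> into the
  squares, so \<open>g \<mapsto> det g mod squares\<close> is a homomorphism killing \<open>K\<close>. If \<open>G\<close> satisfies
  (a)--(c), then \<open>K \<subseteq> G\<close>, and an element of \<open>G\<close> with square determinant \<open>u\<^sup>2\<close> differs from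
  the scalar \<open>u\<close> by an element of \<open>G \<inter> SL\<^sub>2 = H\<close>; so \<open>K\<close> is exactly the part of \<open>G\<close> with
  square determinant. Being a kernel, \<open>K\<close> is normal in \<open>G\<close>, hence \<open>G \<subseteq> \<N>\<close>, and \<open>G/K\<close> maps
  injectively to \<open>Q\<^sub>N\<close>, surjectively by (c). Conversely, the preimage of a subgroup
  \<open>W \<subseteq> \<C>\<close> contains \<open>K\<close>, and injectivity resp. surjectivity of \<open>W \<rightarrow> Q\<^sub>N\<close> give back (a)
  resp. (c).
\<close>

lemma (in group) r_coset_eq_iff:
  assumes "subgroup H G" "x \<in> carrier G" "y \<in> carrier G"
  shows "H #> x = H #> y \<longleftrightarrow> x \<otimes> inv y \<in> H"
  using assms repr_independence rcos_self subgroup.rcos_module[OF _ is_group] by metis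

lemma (in group_hom) subgroup_vimage:
  assumes "subgroup W H"
  shows "subgroup {x \<in> carrier G. h x \<in> W} G"
proof (rule G.subgroupI)
  show "{x \<in> carrier G. h x \<in> W} \<noteq> {}"
    using subgroup.one_closed[OF assms] by force
qed (use assms in \<open>auto intro: subgroup.m_closed subgroup.m_inv_closed\<close>)

text \<open>
  In the application \<open>Gr = GL\<^sub>2(\<int>/N\<int>)\<close>, \<open>U = (\<int>/N\<int>)\<^sup>\<times>\<close>, \<open>d = det\<close>, \<open>Z\<close> is the group of
  scalar matrices, \<open>K = H\<^sup>~\<close> and \<open>Sq\<close> the group of squares.
\<close>

locale det_extension =
  Gr: group Gr + U: comm_group U
  for Gr :: "('a, 'c) monoid_scheme" (structure) and U :: "('b, 'e) monoid_scheme" (structure) +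
  fixes d :: "'a \<Rightarrow> 'b" and K Z H :: "'a set" and Sq :: "'b set"
  assumes d_hom: "d \<in> hom Gr U"
    and K_subgroup: "subgroup K Gr"
    and Z_subgroup: "subgroup Z Gr"
    and K_eq: "K = Z <#> H"
    and H_eq: "H = K \<inter> kernel Gr U d"
    and Sq_eq: "Sq = d ` Z"
begin

abbreviation \<N> :: "'a set" where "\<N> \<equiv> normalizer Gr K"

abbreviation \<C> :: "'a set monoid" where "\<C> \<equiv> Gr\<lparr>carrier := \<N>\<rparr> Mod K"

abbreviation det_cls :: "'a set \<Rightarrow> 'b set" where
  "det_cls \<equiv> \<lambda>A. Sq #>\<^bsub>U\<^esub> d (SOME g. g \<in> A)"

abbreviation cls_preimage :: "'a set set \<Rightarrow> 'a set" where
  "cls_preimage W \<equiv> {g \<in> \<N>. K #> g \<in> W}"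

sublocale d: group_hom Gr U d
  using d_hom by unfold_locales

lemma Sq_subgroup: "subgroup Sq U"
  unfolding Sq_eq by (rule d.subgroup_img_is_subgroup[OF Z_subgroup])

lemma K_carrier: "K \<subseteq> carrier Gr"
  using K_subgroup by (rule subgroup.subset)

lemma Z_subset_K: "Z \<subseteq> K"
proof
  fix z assume z: "z \<in> Z"
  have "\<one> \<in> H" using subgroup.one_closed[OF K_subgroup] H_eq by (simp add: kernel_def)
  moreover have "z = z \<otimes> \<one>" using z Z_subgroup subgroup.subset by fastforce
  ultimately show "z \<in> K" using z K_eq unfolding set_mult_def by blast
qed

lemma d_image_K: "d ` K \<subseteq> Sq"
proof
  fix y assume "y \<in> d ` K"
  then obtain z h where zh: "z \<in> Z" "h \<in> H" and y: "y = d (z \<otimes> h)"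
    using K_eq unfolding set_mult_def by blast
  have "z \<in> carrier Gr" "h \<in> carrier Gr" and "d h = \<one>\<^bsub>U\<^esub>"
    using zh Z_subgroup subgroup.subset H_eq by (auto simp: kernel_def)
  then have "y = d z" using y by simp
  then show "y \<in> Sq" using zh by (simp add: Sq_eq)
qed

sublocale sq_class: group_hom Gr "U Mod Sq" "\<lambda>g. Sq #>\<^bsub>U\<^esub> d g"
proof (intro group_hom.intro group_hom_axioms.intro Gr.is_group)
  have Sq_normal: "Sq \<lhd> U" by (rule U.subgroup_imp_normal[OF Sq_subgroup])
  show "group (U Mod Sq)" by (rule normal.factorgroup_is_group[OF Sq_normal])
  show "(\<lambda>g. Sq #>\<^bsub>U\<^esub> d g) \<in> hom Gr (U Mod Sq)"
    using normal.rcos_sum[OF Sq_normal] subgroup.subset[OF Sq_subgroup]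
    by (intro homI) (auto simp: FactGroup_def U.rcosetsI)
qed

lemma Sq_coset_eq_Sq_iff:
  assumes "g \<in> carrier Gr"
  shows "Sq #>\<^bsub>U\<^esub> d g = Sq \<longleftrightarrow> d g \<in> Sq"
  using assms Sq_subgroup U.coset_join1 U.coset_join2 by auto

lemma normalizer_subgroup: "subgroup \<N> Gr"
  by (rule Gr.normalizer_imp_subgroup[OF K_carrier])

lemma normalizer_carrier: "\<N> \<subseteq> carrier Gr"
  using normalizer_subgroup by (rule subgroup.subset)

lemma K_normal: "K \<lhd> Gr\<lparr>carrier := \<N>\<rparr>"
  by (rule Gr.subgroup_in_normalizer[OF K_subgroup])

lemma K_subset_normalizer: "K \<subseteq> \<N>"
  using normal.axioms(1)[OF K_normal] subgroup.subset by force

sublocale cls: group_hom "Gr\<lparr>carrier := \<N>\<rparr>" \<C> "\<lambda>g. K #> g"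
proof (intro group_hom.intro group_hom_axioms.intro)
  show "group (Gr\<lparr>carrier := \<N>\<rparr>)" by (rule normal.axioms(2)[OF K_normal])
  show "group \<C>" by (rule normal.factorgroup_is_group[OF K_normal])
  show "(\<lambda>g. K #> g) \<in> hom (Gr\<lparr>carrier := \<N>\<rparr>) \<C>"
    using normal.r_coset_hom_Mod[OF K_normal] by simp
qed

lemma carrier_C: "carrier \<C> = (\<lambda>g. K #> g) ` \<N>"
  by (auto simp: FactGroup_def RCOSETS_def r_coset_def)

lemma det_cls_coset:
  assumes g: "g \<in> carrier Gr"
  shows "det_cls (K #> g) = Sq #>\<^bsub>U\<^esub> d g"
proof -
  have "(SOME x. x \<in> K #> g) \<in> K #> g"
    using Gr.rcos_self[OF g K_subgroup] by (rule someI)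
  then obtain k where k: "k \<in> K" and some_eq: "(SOME x. x \<in> K #> g) = k \<otimes> g"
    unfolding r_coset_def by blast
  have kc: "k \<in> carrier Gr" using k K_carrier by blast
  have "Sq #>\<^bsub>U\<^esub> d (k \<otimes> g) = (Sq #>\<^bsub>U\<^esub> d k) #>\<^bsub>U\<^esub> d g"
    using kc g subgroup.subset[OF Sq_subgroup] by (simp add: U.coset_mult_assoc)
  also have "Sq #>\<^bsub>U\<^esub> d k = Sq"
    using Sq_coset_eq_Sq_iff kc k d_image_K by blast
  finally show ?thesis by (simp add: some_eq)
qed

lemma mem_K_iff_d_mem_Sq:
  assumes G: "subgroup G Gr" and KG: "K \<subseteq> G" and GK: "G \<inter> kernel Gr U d \<subseteq> K"
    and g: "g \<in> G"
  shows "g \<in> K \<longleftrightarrow> d g \<in> Sq"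
proof
  assume "g \<in> K"
  then show "d g \<in> Sq" using d_image_K by blast
next
  assume "d g \<in> Sq"
  then obtain z where z: "z \<in> Z" and dz: "d z = d g" by (auto simp: Sq_eq)
  have zK: "z \<in> K" and zG: "z \<in> G" using z Z_subset_K KG by auto
  have zc: "z \<in> carrier Gr" and gc: "g \<in> carrier Gr"
    using zK K_carrier g subgroup.subset[OF G] by auto
  have "g \<otimes> inv z \<in> G"
    using g zG G by (simp add: subgroup.m_closed subgroup.m_inv_closed)
  moreover have "d (g \<otimes> inv z) = \<one>\<^bsub>U\<^esub>" using zc gc dz by simp
  ultimately have "g \<otimes> inv z \<in> K" using GK gc zc by (auto simp: kernel_def)
  then have "g \<otimes> inv z \<otimes> z \<in> K" using zK K_subgroup by (simp add: subgroup.m_closed)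
  then show "g \<in> K" using gc zc by (simp add: Gr.m_assoc)
qed

lemma subset_normalizer:
  assumes G: "subgroup G Gr" and KG: "K \<subseteq> G" and GK: "G \<inter> kernel Gr U d \<subseteq> K"
  shows "G \<subseteq> \<N>"
proof -
  have Gc: "G \<subseteq> carrier Gr" using G by (rule subgroup.subset)
  interpret G: group "Gr\<lparr>carrier := G\<rparr>" using G by (rule Gr.subgroup_imp_group)
  interpret sqG: group_hom "Gr\<lparr>carrier := G\<rparr>" "U Mod Sq" "\<lambda>g. Sq #>\<^bsub>U\<^esub> d g"
  proof (intro group_hom.intro group_hom_axioms.intro G.is_group sq_class.H.is_group)
    show "(\<lambda>g. Sq #>\<^bsub>U\<^esub> d g) \<in> hom (Gr\<lparr>carrier := G\<rparr>) (U Mod Sq)"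
    proof (rule homI)
      fix x y assume "x \<in> carrier (Gr\<lparr>carrier := G\<rparr>)" "y \<in> carrier (Gr\<lparr>carrier := G\<rparr>)"
      then have "x \<in> carrier Gr" "y \<in> carrier Gr" using Gc by auto
      then show "Sq #>\<^bsub>U\<^esub> d (x \<otimes>\<^bsub>Gr\<lparr>carrier := G\<rparr>\<^esub> y)
          = (Sq #>\<^bsub>U\<^esub> d x) \<otimes>\<^bsub>U Mod Sq\<^esub> (Sq #>\<^bsub>U\<^esub> d y)"
        using sq_class.hom_mult by simp
    qed (use Gc in auto)
  qed
  have "kernel (Gr\<lparr>carrier := G\<rparr>) (U Mod Sq) (\<lambda>g. Sq #>\<^bsub>U\<^esub> d g) = K"
    using mem_K_iff_d_mem_Sq[OF G KG GK] Sq_coset_eq_Sq_iff Gc KG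
    by (auto simp: kernel_def FactGroup_def)
  then have "K \<lhd> Gr\<lparr>carrier := G\<rparr>" using sqG.normal_kernel by simp
  then show ?thesis
    using Gr.normal_imp_subgroup_normalizer[OF G] subgroup.subset by force
qed

lemma subgroup_cls_preimage:
  assumes "subgroup W \<C>"
  shows "subgroup (cls_preimage W) Gr"
  using Gr.incl_subgroup[OF normalizer_subgroup cls.subgroup_vimage[OF assms]]
  by simp

lemma K_subset_cls_preimage:
  assumes "subgroup W \<C>"
  shows "K \<subseteq> cls_preimage W"
  using subgroup.one_closed[OF assms] K_subset_normalizer Gr.coset_join2[OF _ K_subgroup] K_carrier
  by (auto simp: FactGroup_def)

lemma image_cls_preimage:
  assumes "W \<subseteq> carrier \<C>"
  shows "(\<lambda>g. K #> g) ` cls_preimage W = W"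
  using assms carrier_C by auto

lemma cls_preimage_image:
  assumes G: "subgroup G Gr" and KG: "K \<subseteq> G" and GN: "G \<subseteq> \<N>"
  shows "cls_preimage ((\<lambda>g. K #> g) ` G) = G"
proof (intro equalityI subsetI)
  fix g assume "g \<in> cls_preimage ((\<lambda>g. K #> g) ` G)"
  then obtain g' where g: "g \<in> \<N>" and g': "g' \<in> G" and eq: "K #> g = K #> g'" by auto
  have gc: "g \<in> carrier Gr" and g'c: "g' \<in> carrier Gr"
    using g g' GN normalizer_carrier by auto
  have "g \<otimes> inv g' \<in> G" using Gr.r_coset_eq_iff[OF K_subgroup gc g'c] eq KG by blast
  then have "g \<otimes> inv g' \<otimes> g' \<in> G" using g' G by (simp add: subgroup.m_closed)
  then show "g \<in> G" using gc g'c by (simp add: Gr.m_assoc)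
qed (use GN in auto)

lemma det_cls_hom:
  assumes "W \<subseteq> carrier \<C>"
  shows "det_cls \<in> hom (\<C>\<lparr>carrier := W\<rparr>) (U Mod Sq)"
proof (rule homI)
  fix A assume "A \<in> carrier (\<C>\<lparr>carrier := W\<rparr>)"
  then obtain g where "g \<in> \<N>" "A = K #> g" using assms carrier_C by auto
  then show "det_cls A \<in> carrier (U Mod Sq)"
    using normalizer_carrier det_cls_coset sq_class.hom_closed by auto
next
  fix A B assume "A \<in> carrier (\<C>\<lparr>carrier := W\<rparr>)" "B \<in> carrier (\<C>\<lparr>carrier := W\<rparr>)"
  then have "A \<in> (\<lambda>g. K #> g) ` \<N>" "B \<in> (\<lambda>g. K #> g) ` \<N>" using assms carrier_C by auto
  then obtain a b where ab: "a \<in> \<N>" "b \<in> \<N>" and A: "A = K #> a" and B: "B = K #> b"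
    by blast
  have abc: "a \<in> carrier Gr" "b \<in> carrier Gr" using ab normalizer_carrier by auto
  have "A \<otimes>\<^bsub>\<C>\<lparr>carrier := W\<rparr>\<^esub> B = K #> (a \<otimes> b)"
    using cls.hom_mult[of a b] ab A B by simp
  then show "det_cls (A \<otimes>\<^bsub>\<C>\<lparr>carrier := W\<rparr>\<^esub> B) = det_cls A \<otimes>\<^bsub>U Mod Sq\<^esub> det_cls B"
    using abc A B sq_class.hom_mult[OF abc] by (simp add: det_cls_coset)
qed

lemma inj_on_det_cls_iff:
  assumes G: "subgroup G Gr" and KG: "K \<subseteq> G"
  shows "inj_on det_cls ((\<lambda>g. K #> g) ` G) \<longleftrightarrow> G \<inter> kernel Gr U d \<subseteq> K"
proof
  have Gc: "G \<subseteq> carrier Gr" using G by (rule subgroup.subset)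
  assume inj: "inj_on det_cls ((\<lambda>g. K #> g) ` G)"
  show "G \<inter> kernel Gr U d \<subseteq> K"
  proof
    fix g assume g: "g \<in> G \<inter> kernel Gr U d"
    have gc: "g \<in> carrier Gr" and dg: "d g = \<one>\<^bsub>U\<^esub>" using g by (auto simp: kernel_def)
    have "det_cls (K #> g) = det_cls (K #> \<one>)"
      using gc dg subgroup.subset[OF Sq_subgroup] by (simp add: det_cls_coset)
    moreover have "K #> g \<in> (\<lambda>g. K #> g) ` G" "K #> \<one> \<in> (\<lambda>g. K #> g) ` G"
      using g subgroup.one_closed[OF G] by auto
    ultimately have "K #> g = K #> \<one>" by (rule inj_onD[OF inj])
    then show "g \<in> K" using gc K_carrier K_subgroup Gr.coset_join1 by simp
  qed
next
  have Gc: "G \<subseteq> carrier Gr" using G by (rule subgroup.subset)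
  assume GK: "G \<inter> kernel Gr U d \<subseteq> K"
  show "inj_on det_cls ((\<lambda>g. K #> g) ` G)"
  proof (rule inj_onI)
    fix A B assume "A \<in> (\<lambda>g. K #> g) ` G" "B \<in> (\<lambda>g. K #> g) ` G"
    then obtain a b where ab: "a \<in> G" "b \<in> G" and A: "A = K #> a" and B: "B = K #> b" by blast
    assume "det_cls A = det_cls B"
    then have eq: "det_cls (K #> a) = det_cls (K #> b)" by (simp only: A B)
    have abc: "a \<in> carrier Gr" "b \<in> carrier Gr" using ab Gc by auto
    have "d a \<otimes>\<^bsub>U\<^esub> inv\<^bsub>U\<^esub> d b \<in> Sq"
      using eq abc U.r_coset_eq_iff[OF Sq_subgroup] by (simp add: det_cls_coset)
    then have "d (a \<otimes> inv b) \<in> Sq" using abc by simp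
    moreover have "a \<otimes> inv b \<in> G" using ab G by (simp add: subgroup.m_closed subgroup.m_inv_closed)
    ultimately have "a \<otimes> inv b \<in> K" using mem_K_iff_d_mem_Sq[OF G KG GK] by blast
    then show "A = B" using Gr.r_coset_eq_iff[OF K_subgroup abc] A B by blast
  qed
qed

lemma det_cls_image_iff:
  assumes G: "subgroup G Gr" and KG: "K \<subseteq> G"
  shows "det_cls ` (\<lambda>g. K #> g) ` G = carrier (U Mod Sq) \<longleftrightarrow> d ` G = carrier U"
proof -
  have Gc: "G \<subseteq> carrier Gr" using G by (rule subgroup.subset)
  have image: "det_cls ` (\<lambda>g. K #> g) ` G = (\<lambda>u. Sq #>\<^bsub>U\<^esub> u) ` d ` G"
    unfolding image_image using Gc by (intro image_cong refl) (auto simp: det_cls_coset)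
  have carrier: "carrier (U Mod Sq) = (\<lambda>u. Sq #>\<^bsub>U\<^esub> u) ` carrier U"
    unfolding FactGroup_def RCOSETS_def by auto
  show ?thesis
  proof
    assume surj: "det_cls ` (\<lambda>g. K #> g) ` G = carrier (U Mod Sq)"
    show "d ` G = carrier U"
    proof (intro equalityI subsetI)
      fix u assume u: "u \<in> carrier U"
      then have "Sq #>\<^bsub>U\<^esub> u \<in> (\<lambda>u. Sq #>\<^bsub>U\<^esub> u) ` d ` G"
        using surj unfolding image carrier by blast
      then obtain g where g: "g \<in> G" and eq: "Sq #>\<^bsub>U\<^esub> u = Sq #>\<^bsub>U\<^esub> d g" by blast
      have gc: "g \<in> carrier Gr" using g Gc by blast
      have "u \<otimes>\<^bsub>U\<^esub> inv\<^bsub>U\<^esub> d g \<in> d ` Z"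
        using eq U.r_coset_eq_iff[OF Sq_subgroup u d.hom_closed[OF gc]] Sq_eq by simp
      then obtain z where z: "z \<in> Z" and dz: "u \<otimes>\<^bsub>U\<^esub> inv\<^bsub>U\<^esub> d g = d z" by blast
      have zc: "z \<in> carrier Gr" using z Z_subset_K K_carrier by blast
      have "z \<otimes> g \<in> G" using z Z_subset_K KG g G by (blast intro: subgroup.m_closed)
      moreover have "d (z \<otimes> g) = u" using zc gc dz[symmetric] u by (simp add: U.m_assoc)
      ultimately show "u \<in> d ` G" by (metis imageI)
    qed (use Gc in auto)
  qed (simp add: image carrier)
qed

lemma det_cls_iso_iff:
  assumes G: "subgroup G Gr" and KG: "K \<subseteq> G" and GN: "G \<subseteq> \<N>"
  shows "det_cls \<in> iso (\<C>\<lparr>carrier := (\<lambda>g. K #> g) ` G\<rparr>) (U Mod Sq)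
    \<longleftrightarrow> G \<inter> kernel Gr U d \<subseteq> K \<and> d ` G = carrier U"
  using det_cls_hom[of "(\<lambda>g. K #> g) ` G"] GN carrier_C
    inj_on_det_cls_iff[OF G KG] det_cls_image_iff[OF G KG]
  by (auto simp: iso_def bij_betw_def)

theorem extension_iff_cls_preimage:
  "subgroup G Gr \<and> G \<inter> kernel Gr U d = H \<and> Z \<subseteq> G \<and> d ` G = carrier U
    \<longleftrightarrow> (\<exists>W. subgroup W \<C> \<and> det_cls \<in> iso (\<C>\<lparr>carrier := W\<rparr>) (U Mod Sq) \<and> G = cls_preimage W)"
proof
  assume "subgroup G Gr \<and> G \<inter> kernel Gr U d = H \<and> Z \<subseteq> G \<and> d ` G = carrier U"
  then have G: "subgroup G Gr" and GH: "G \<inter> kernel Gr U d = H" and ZG: "Z \<subseteq> G"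
    and dG: "d ` G = carrier U" by auto
  have "K = Z <#> H" by (rule K_eq)
  also have "\<dots> \<subseteq> G" using ZG GH G by (auto simp: set_mult_def intro: subgroup.m_closed)
  finally have KG: "K \<subseteq> G" .
  have GK: "G \<inter> kernel Gr U d \<subseteq> K" using GH H_eq by blast
  have GN: "G \<subseteq> \<N>" by (rule subset_normalizer[OF G KG GK])
  show "\<exists>W. subgroup W \<C> \<and> det_cls \<in> iso (\<C>\<lparr>carrier := W\<rparr>) (U Mod Sq) \<and> G = cls_preimage W"
  proof (intro exI conjI)
    show "subgroup ((\<lambda>g. K #> g) ` G) \<C>"
      using cls.subgroup_img_is_subgroup Gr.subgroup_incl[OF G normalizer_subgroup GN]
      by simp
    show "det_cls \<in> iso (\<C>\<lparr>carrier := (\<lambda>g. K #> g) ` G\<rparr>) (U Mod Sq)"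
      using det_cls_iso_iff[OF G KG GN] GK dG by blast
    show "G = cls_preimage ((\<lambda>g. K #> g) ` G)"
      using cls_preimage_image[OF G KG GN] by simp
  qed
next
  assume "\<exists>W. subgroup W \<C> \<and> det_cls \<in> iso (\<C>\<lparr>carrier := W\<rparr>) (U Mod Sq) \<and> G = cls_preimage W"
  then obtain W where W: "subgroup W \<C>" and iso: "det_cls \<in> iso (\<C>\<lparr>carrier := W\<rparr>) (U Mod Sq)"
    and G_eq: "G = cls_preimage W" by blast
  have G: "subgroup G Gr" unfolding G_eq by (rule subgroup_cls_preimage[OF W])
  have KG: "K \<subseteq> G" unfolding G_eq by (rule K_subset_cls_preimage[OF W])
  have GN: "G \<subseteq> \<N>" unfolding G_eq by blast
  have "W = (\<lambda>g. K #> g) ` G"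
    unfolding G_eq by (rule image_cls_preimage[symmetric, OF subgroup.subset[OF W]])
  then have "G \<inter> kernel Gr U d \<subseteq> K \<and> d ` G = carrier U"
    using iso det_cls_iso_iff[OF G KG GN] by simp
  then show "subgroup G Gr \<and> G \<inter> kernel Gr U d = H \<and> Z \<subseteq> G \<and> d ` G = carrier U"
    using G KG Z_subset_K H_eq by auto
qed

end

lemma mred_idem [simp]: "mred N (mred N A) = mred N A"
  by (cases A) simp

lemma mred_mmul_left: "mred N (mmul (mred N A) B) = mred N (mmul A B)"
proof -
  have "(a mod n * b + c mod n * d) mod n = (a * b + c * d) mod n" for a b c d n :: int
    by (metis mod_add_eq mod_mult_left_eq)
  then show ?thesis by (cases A; cases B) simp
qed

lemma mred_mmul_right: "mred N (mmul A (mred N B)) = mred N (mmul A B)"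
proof -
  have "(a * (b mod n) + c * (d mod n)) mod n = (a * b + c * d) mod n" for a b c d n :: int
    by (metis mod_add_eq mod_mult_right_eq)
  then show ?thesis by (cases A; cases B) simp
qed

lemma mmul_assoc: "mmul (mmul A B) C = mmul A (mmul B C)"
  by (cases A; cases B; cases C) (simp add: algebra_simps)

lemma mdet_mmul: "mdet (mmul A B) = mdet A * mdet B"
  by (cases A; cases B) (simp add: algebra_simps)

lemma mdet_mred_mod: "mdet (mred N A) mod int N = mdet A mod int N"
proof -
  have "(a mod n * (d mod n) - b mod n * (c mod n)) mod n = (a * d - b * c) mod n" for a b c d n :: int
    by (metis mod_diff_eq mod_mult_eq)
  then show ?thesis by (cases A) simp
qed

lemma coprime_mdet_mred:
  assumes "N > 0"
  shows "coprime (mdet (mred N A)) (int N) \<longleftrightarrow> coprime (mdet A) (int N)"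
proof -
  have "coprime (mdet (mred N A)) (int N) \<longleftrightarrow> coprime (mdet (mred N A) mod int N) (int N)"
    using assms by simp
  also have "\<dots> \<longleftrightarrow> coprime (mdet A mod int N) (int N)" by (simp only: mdet_mred_mod)
  also have "\<dots> \<longleftrightarrow> coprime (mdet A) (int N)" using assms by simp
  finally show ?thesis .
qed

lemma mmul_scal_commute: "mmul (scal u) A = mmul A (scal u)"
  by (cases A) (simp add: scal_def ac_simps)

lemma GL2_carrier: "A \<in> carrier (GL2 N) \<longleftrightarrow> mred N A = A \<and> coprime (mdet A) (int N)"
  by (simp add: GL2_def)

lemma GL2_mult: "A \<otimes>\<^bsub>GL2 N\<^esub> B = mred N (mmul A B)"
  by (simp add: GL2_def)

lemma GL2_one: "N > 1 \<Longrightarrow> \<one>\<^bsub>GL2 N\<^esub> = (1, 0, 0, 1)"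
  by (simp add: GL2_def)

lemma UnitsN_carrier: "carrier (UnitsN N) = units_mod N"
  by (simp add: UnitsN_def)

lemma UnitsN_mult: "x \<otimes>\<^bsub>UnitsN N\<^esub> y = (x * y) mod int N"
  by (simp add: UnitsN_def)

lemma UnitsN_one: "\<one>\<^bsub>UnitsN N\<^esub> = 1 mod int N"
  by (simp add: UnitsN_def)

lemma UnitsN_eq_units_of_residue_ring:
  assumes N: "N > 1"
  shows "UnitsN N = units_of (residue_ring (int N))"
proof -
  interpret residues "int N" "residue_ring (int N)"
    using N by unfold_locales simp
  have "\<not> coprime 0 (int N)" using N by simp
  then have "units_mod N = Units (residue_ring (int N))"
    unfolding units_mod_def res_units_eq by (auto simp: le_less)
  moreover have "1 mod int N = 1" using N by simp
  ultimately show ?thesis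
    unfolding UnitsN_def units_of_def by (simp add: residue_ring_def)
qed

lemma UnitsN_comm_group:
  assumes N: "N > 1"
  shows "comm_group (UnitsN N)"
proof -
  interpret residues "int N" "residue_ring (int N)"
    using N by unfold_locales simp
  show ?thesis unfolding UnitsN_eq_units_of_residue_ring[OF N] by (rule units_comm_group)
qed

lemma GL2_group:
  assumes N: "N > 1"
  shows "group (GL2 N)"
proof (rule groupI)
  fix A assume A: "A \<in> carrier (GL2 N)"
  have N0: "N > 0" using N by simp
  interpret U: comm_group "UnitsN N" by (rule UnitsN_comm_group[OF N])
  have "mdet A mod int N \<in> carrier (UnitsN N)"
    using A N by (simp add: GL2_carrier UnitsN_carrier units_mod_def)
  then obtain t where t: "t \<in> units_mod N" and "(t * (mdet A mod int N)) mod int N = 1"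
    using U.l_inv_ex N by (auto simp: UnitsN_carrier UnitsN_mult UnitsN_one)
  then have t_inv: "(t * mdet A) mod int N = 1" by (simp add: mod_mult_right_eq)
  obtain a b c e where A_eq: "A = (a, b, c, e)" by (cases A)
  \<comment> \<open>\<open>t\<close> times the adjugate of \<open>A\<close>, with \<open>t\<close> inverse to \<open>det A\<close> modulo \<open>N\<close>\<close>
  define B where "B = mred N (t * e, - (t * b), - (t * c), t * a)"
  have "mdet (t * e, - (t * b), - (t * c), t * a) = t * t * mdet A"
    by (simp add: A_eq algebra_simps)
  then have "coprime (mdet B) (int N)"
    unfolding B_def coprime_mdet_mred[OF N0] using t A by (simp add: GL2_carrier units_mod_def)
  then have "B \<in> carrier (GL2 N)" unfolding GL2_carrier by (simp add: B_def)
  moreover have "mmul (t * e, - (t * b), - (t * c), t * a) A = scal (t * mdet A)"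
    by (simp add: A_eq scal_def algebra_simps)
  then have "B \<otimes>\<^bsub>GL2 N\<^esub> A = \<one>\<^bsub>GL2 N\<^esub>"
    unfolding B_def GL2_mult mred_mmul_left using t_inv N by (simp add: GL2_one scal_def)
  ultimately show "\<exists>B\<in>carrier (GL2 N). B \<otimes>\<^bsub>GL2 N\<^esub> A = \<one>\<^bsub>GL2 N\<^esub>" by blast
next
  fix A B assume "A \<in> carrier (GL2 N)" "B \<in> carrier (GL2 N)"
  then show "A \<otimes>\<^bsub>GL2 N\<^esub> B \<in> carrier (GL2 N)"
    using N by (simp add: GL2_carrier GL2_mult coprime_mdet_mred mdet_mmul)
next
  fix A B C
  show "A \<otimes>\<^bsub>GL2 N\<^esub> B \<otimes>\<^bsub>GL2 N\<^esub> C = A \<otimes>\<^bsub>GL2 N\<^esub> (B \<otimes>\<^bsub>GL2 N\<^esub> C)"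
    by (simp add: GL2_mult mred_mmul_left mred_mmul_right mmul_assoc)
next
  fix A assume "A \<in> carrier (GL2 N)"
  then show "\<one>\<^bsub>GL2 N\<^esub> \<otimes>\<^bsub>GL2 N\<^esub> A = A"
    using N by (cases A) (simp add: GL2_carrier GL2_mult GL2_one)
qed (use N in \<open>simp add: GL2_carrier GL2_one\<close>)

lemma det_hom: "N > 1 \<Longrightarrow> (\<lambda>A. mdet A mod int N) \<in> hom (GL2 N) (UnitsN N)"
  by (rule homI) (simp_all add: GL2_carrier GL2_mult UnitsN_carrier UnitsN_mult units_mod_def
                   mdet_mred_mod mdet_mmul mod_mult_eq)

lemma SL2Z_group: "group SL2Z"
proof (rule groupI)
  fix A assume A: "A \<in> carrier SL2Z"
  obtain a b c e where A_eq: "A = (a, b, c, e)" by (cases A)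
  have "(e, - b, - c, a) \<in> carrier SL2Z" "mmul (e, - b, - c, a) A = (1, 0, 0, 1)"
    using A by (simp_all add: SL2Z_def A_eq algebra_simps)
  then show "\<exists>B\<in>carrier SL2Z. B \<otimes>\<^bsub>SL2Z\<^esub> A = \<one>\<^bsub>SL2Z\<^esub>"
    by (intro bexI[of _ "(e, - b, - c, a)"]) (simp_all add: SL2Z_def)
next
  fix A assume "A \<in> carrier SL2Z"
  then show "\<one>\<^bsub>SL2Z\<^esub> \<otimes>\<^bsub>SL2Z\<^esub> A = A" by (cases A) (simp add: SL2Z_def)
qed (simp_all add: SL2Z_def mdet_mmul mmul_assoc)

lemma mred_hom: "N > 1 \<Longrightarrow> mred N \<in> hom SL2Z (GL2 N)"
  by (rule homI) (simp_all add: SL2Z_def GL2_carrier GL2_mult coprime_mdet_mred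
                   mred_mmul_left mred_mmul_right)

lemma scal_hom: "N > 1 \<Longrightarrow> scal \<in> hom (UnitsN N) (GL2 N)"
  by (rule homI) (simp_all add: scal_def UnitsN_carrier UnitsN_mult units_mod_def GL2_carrier GL2_mult)

lemma scalars_normal:
  assumes N: "N > 1"
  shows "scal ` units_mod N \<lhd> GL2 N"
proof -
  interpret GL: group "GL2 N" by (rule GL2_group[OF N])
  interpret scal: group_hom "UnitsN N" "GL2 N" scal
    using scal_hom[OF N] UnitsN_comm_group[OF N]
    by (simp add: group_hom_def group_hom_axioms_def comm_group.axioms(2) GL.is_group)
  show ?thesis
  proof (rule GL.normalI)
    show "subgroup (scal ` units_mod N) (GL2 N)"
      using scal.img_is_subgroup by (simp add: UnitsN_carrier)
    show "\<forall>A\<in>carrier (GL2 N). scal ` units_mod N #>\<^bsub>GL2 N\<^esub> A = A <#\<^bsub>GL2 N\<^esub> scal ` units_mod N"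
      by (auto simp: r_coset_def l_coset_def GL2_mult mmul_scal_commute)
  qed
qed

lemma Htilde_eq_set_mult: "Htilde N H = scal ` units_mod N <#>\<^bsub>GL2 N\<^esub> H"
  unfolding Htilde_def set_mult_def GL2_mult by blast

lemma SL2_eq_kernel: "SL2 N = kernel (GL2 N) (UnitsN N) (\<lambda>A. mdet A mod int N)"
  by (simp add: SL2_def kernel_def UnitsN_one)

lemma squares_mod_eq_det_image: "squares_mod N = (\<lambda>A. mdet A mod int N) ` scal ` units_mod N"
  by (simp add: squares_mod_def scal_def image_image Setcompr_eq_image)

theorem lemma5p2:
  fixes \<Gamma> :: "mat2 set" and N0 N :: nat and H :: "mat2 set"
  assumes "congruence_subgroup \<Gamma>"
    and "(-1, 0, 0, -1) \<in> \<Gamma>"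
    and "N0 = level \<Gamma>"
    and "N = (if multiplicity 2 N0 = 0 then N0
              else if multiplicity 2 N0 = 1 then 4 * N0 else 2 * N0)"
    and "N > 1"
    and "H = mred N ` \<Gamma>"
    and "H = Htilde N H \<inter> SL2 N"
  shows "\<forall>G. (subgroup G (GL2 N) \<and> G \<inter> SL2 N = H
              \<and> scal ` units_mod N \<subseteq> G
              \<and> (\<lambda>A. mdet A mod int N) ` G = units_mod N)
          \<longleftrightarrow> (\<exists>W. subgroup W (Cgrp N H)
                   \<and> detC N \<in> iso ((Cgrp N H)\<lparr>carrier := W\<rparr>) (QN N)
                   \<and> G = preimC N H W)"
proof -
  have N: "N > 1" by fact
  interpret GL: group "GL2 N" by (rule GL2_group[OF N])
  interpret reduction: group_hom SL2Z "GL2 N" "mred N"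
    using mred_hom[OF N] by (intro group_hom.intro group_hom_axioms.intro SL2Z_group GL.is_group)
  have "subgroup \<Gamma> SL2Z" using assms(1) by (simp add: congruence_subgroup_def)
  then have H_subgroup: "subgroup H (GL2 N)"
    unfolding assms(6) by (rule reduction.subgroup_img_is_subgroup)
  have scalars: "scal ` units_mod N \<lhd> GL2 N" by (rule scalars_normal[OF N])
  interpret det_extension "GL2 N" "UnitsN N" "\<lambda>A. mdet A mod int N" "Htilde N H"
      "scal ` units_mod N" H "squares_mod N"
  proof (intro det_extension.intro det_extension_axioms.intro GL.is_group UnitsN_comm_group[OF N])
    show "(\<lambda>A. mdet A mod int N) \<in> hom (GL2 N) (UnitsN N)" by (rule det_hom[OF N])
    show "subgroup (Htilde N H) (GL2 N)"
      unfolding Htilde_eq_set_mult by (rule GL.mult_norm_subgroup[OF scalars H_subgroup])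
    show "subgroup (scal ` units_mod N) (GL2 N)" using scalars by (rule normal_imp_subgroup)
    show "Htilde N H = scal ` units_mod N <#>\<^bsub>GL2 N\<^esub> H" by (rule Htilde_eq_set_mult)
    show "H = Htilde N H \<inter> kernel (GL2 N) (UnitsN N) (\<lambda>A. mdet A mod int N)"
      using assms(7) unfolding SL2_eq_kernel .
    show "squares_mod N = (\<lambda>A. mdet A mod int N) ` scal ` units_mod N"
      by (rule squares_mod_eq_det_image)
  qed
  show ?thesis
    using extension_iff_cls_preimage
    unfolding Cgrp_def NormHt_def QN_def preimC_def detC_def[abs_def] SL2_eq_kernel UnitsN_carrier
    by blast
qed

end
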